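(* (1) For each $p\ge 3$ there is an instance with $p$ binary attributes and $k=2$ such that the set of committees optimal for $\|\cdot\|_1$ and the set of committees optimal for $\|\cdot\|_{\max}$ are disjoint. (2) For each $p\ge 3$ there is an instance with $p$ attributes such that the set of committees optimal for $\|\cdot\|_{\max}$ and the set of committees optimal for $\|\cdot\|_{1,\max}$ are disjoint. (3) For each $p\ge 2$ there is an instance with $p$ attributes, at least one of which has a domain with $4$ values, such that the set of committees optimal for $\|\cdot\|_1$ and the set of committees optimal for $\|\cdot\|_{1,\max}$ are disjoint. (4) There is an instance with $p=2$ binary attributes such that the set of committees optimal for $\|\cdot\|_1$ differs from the set of committees optimal for $\|\cdot\|_{\max}$.
   Context: An instance consists of attributes $X_1,\dots,X_p$, each $X_i$ with finite domain $D_i=\{x_i^1,\dots,x_i^{q_i}\}$ (binary means $|D_i|=2$); a candidate database, i.e. a finite set $C$ in which each candidate $c$ has a value vector $(X_1(c),\dots,X_p(c))\in D_1\times\dots\times D_p$ (different candidates may share a vector); a target distribution $\pi=(\pi_1,\dots,\pi_p)$ with $\pi_i=(\pi_i^1,\dots,\pi_i^{q_i})$ nonnegative reals summing to $1$; and an integer $k\in\{1,\dots,|C|\}$. For $A\subseteq C$ with $|A|=k$, $r_i^j(A)=|\{c\in A: X_i(c)=x_i^j\}|/k$. Loss functions: $\|\pi,r(A)\|_1=\sum_{i,j}|r_i^j(A)-\pi_i^j|$; $\|\pi,r(A)\|_{1,\max}=\sum_i\max_j|r_i^j(A)-\pi_i^j|$; $\|\pi,r(A)\|_{\max}=\max_{i,j}|r_i^j(A)-\pi_i^j|$.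 A committee of size $k$ is optimal for a loss $f$ if it minimizes $f(\pi,r(A))$ over all $k$-element subsets of $C$. *)

theory Defs
  imports Complex_Main
begin

(* An instance: p attributes indexed 0..<p; attribute i has domain {0..<q i}
   (value j stands for x_i^(j+1)); candidates form a finite set C :: nat set;
   X c i is the value of attribute i for candidate c; tgt i j is the target
   proportion of value j of attribute i; k is the committee size. *)

definition valid_instance ::
  "nat \<Rightarrow> (nat \<Rightarrow> nat) \<Rightarrow> nat set \<Rightarrow> (nat \<Rightarrow> nat \<Rightarrow> nat)
   \<Rightarrow> (nat \<Rightarrow> nat \<Rightarrow> real) \<Rightarrow> nat \<Rightarrow> bool" where
  "valid_instance p q C X tgt k \<longleftrightarrow>
     finite C \<and>
     (\<forall>c\<in>C. \<forall>i<p. X c i < q i) \<and>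
     (\<forall>i<p. (\<forall>j<q i. tgt i j \<ge> 0) \<and> (\<Sum>j<q i. tgt i j) = 1) \<and>
     1 \<le> k \<and> k \<le> card C"

definition ratio :: "(nat \<Rightarrow> nat \<Rightarrow> nat) \<Rightarrow> nat \<Rightarrow> nat set \<Rightarrow> nat \<Rightarrow> nat \<Rightarrow> real" where
  "ratio X k A i j = real (card {c\<in>A. X c i = j}) / real k"

definition loss_1 ::
  "nat \<Rightarrow> (nat \<Rightarrow> nat) \<Rightarrow> (nat \<Rightarrow> nat \<Rightarrow> real) \<Rightarrow> (nat \<Rightarrow> nat \<Rightarrow> nat) \<Rightarrow> nat \<Rightarrow> nat set \<Rightarrow> real" where
  "loss_1 p q tgt X k A = (\<Sum>i<p. \<Sum>j<q i. \<bar>ratio X k A i j - tgt i j\<bar>)"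

definition loss_1max ::
  "nat \<Rightarrow> (nat \<Rightarrow> nat) \<Rightarrow> (nat \<Rightarrow> nat \<Rightarrow> real) \<Rightarrow> (nat \<Rightarrow> nat \<Rightarrow> nat) \<Rightarrow> nat \<Rightarrow> nat set \<Rightarrow> real" where
  "loss_1max p q tgt X k A = (\<Sum>i<p. Max {\<bar>ratio X k A i j - tgt i j\<bar> | j. j < q i})"

definition loss_max ::
  "nat \<Rightarrow> (nat \<Rightarrow> nat) \<Rightarrow> (nat \<Rightarrow> nat \<Rightarrow> real) \<Rightarrow> (nat \<Rightarrow> nat \<Rightarrow> nat) \<Rightarrow> nat \<Rightarrow> nat set \<Rightarrow> real" where
  "loss_max p q tgt X k A = Max {\<bar>ratio X k A i j - tgt i j\<bar> | i j. i < p \<and> j < q i}"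

definition optimal_committees :: "(nat set \<Rightarrow> real) \<Rightarrow> nat set \<Rightarrow> nat \<Rightarrow> nat set set" where
  "optimal_committees f C k =
     {A. A \<subseteq> C \<and> card A = k \<and> (\<forall>B. B \<subseteq> C \<and> card B = k \<longrightarrow> f A \<le> f B)}"

end

theory Submission imports Defs begin

text \<open>All four instances have three candidates and committees of size two, so only three
  committees compete and their losses can be computed exactly. Attributes beyond the first
  few are constant on all candidates and their target is the point mass on that constant,
  so they contribute nothing to any loss: this is what makes the examples work for every
  larger number of attributes. The examples exploit that the \<open>\<ell>\<^sub>1\<close> loss adds up all deviations
  while the max-type losses only see the worst one: a committee that misses a single
  attribute completely but fits the others well wins for one loss and loses for the other.\<close>

lemma card_2_subset_of_3:
  assumes "A \<subseteq> {a, b, c}" "card A = 2"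
  shows "A = {a, b} \<or> A = {a, c} \<or> A = {b, c}"
proof -
  obtain x y where "A = {x, y}" "x \<noteq> y"
    using assms(2) by (meson card_2_iff)
  with assms(1) show ?thesis by auto
qed

lemma optimal_committees_disjointI:
  assumes "\<And>A. A \<subseteq> C \<Longrightarrow> card A = k \<Longrightarrow> \<exists>B. B \<subseteq> C \<and> card B = k \<and> (f B < f A \<or> g B < g A)"
  shows "optimal_committees f C k \<inter> optimal_committees g C k = {}"
proof -
  have "A \<notin> optimal_committees f C k \<inter> optimal_committees g C k" for A
  proof
    assume "A \<in> optimal_committees f C k \<inter> optimal_committees g C k"
    then have A: "A \<subseteq> C" "card A = k"
      and min: "\<And>B. B \<subseteq> C \<Longrightarrow> card B = k \<Longrightarrow> f A \<le> f B \<and> g A \<le> g B"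
      unfolding optimal_committees_def by auto
    obtain B where "B \<subseteq> C" "card B = k" "f B < f A \<or> g B < g A"
      using assms[OF A] by blast
    then show False
      using min[of B] by linarith
  qed
  then show ?thesis by blast
qed

lemma optimal_pair_committees_disjointI:
  fixes f g :: "nat set \<Rightarrow> real"
  assumes "\<forall>A\<in>{{0, 1}, {0, 2}, {1, 2}}. \<exists>B\<in>{{0, 1}, {0, 2}, {1, 2}}. f B < f A \<or> g B < g A"
  shows "optimal_committees f {0, 1, 2} 2 \<inter> optimal_committees g {0, 1, 2} 2 = {}"
proof (rule optimal_committees_disjointI)
  fix A :: "nat set" assume "A \<subseteq> {0, 1, 2}" "card A = 2"
  then have "A \<in> {{0, 1}, {0, 2}, {1, 2}}"
    using card_2_subset_of_3 by (metis insertCI)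
  from bspec[OF assms this] obtain B where "B \<in> {{0, 1}, {0, 2}, {1, 2}}" "f B < f A \<or> g B < g A"
    by (elim bexE)
  then show "\<exists>B. B \<subseteq> {0, 1, 2} \<and> card B = 2 \<and> (f B < f A \<or> g B < g A)"
    by (intro exI[of _ B]) auto
qed

lemma ratio_pair:
  assumes "a \<noteq> b"
  shows "ratio X k {a, b} i j = (of_bool (X a i = j) + of_bool (X b i = j)) / real k"
proof -
  have "{c\<in>{a, b}. X c i = j} = (if X a i = j then {a} else {}) \<union> (if X b i = j then {b} else {})"
    by auto
  with assms show ?thesis by (simp add: ratio_def)
qed

lemma ratio_constant_attribute:
  assumes "\<forall>c\<in>A. X c i = v" "card A = k" "0 < k"
  shows "ratio X k A i j = of_bool (j = v)"
proof -
  have "{c\<in>A. X c i = j} = (if j = v then A else {})"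
    using assms(1) by auto
  with assms(2,3) show ?thesis by (simp add: ratio_def)
qed

lemma loss_1_truncate:
  assumes "m \<le> p" "\<And>i j. m \<le> i \<Longrightarrow> i < p \<Longrightarrow> j < q i \<Longrightarrow> ratio X k A i j = tgt i j"
  shows "loss_1 p q tgt X k A = loss_1 m q tgt X k A"
  unfolding loss_1_def
  by (rule sum.mono_neutral_right) (use assms in auto)

lemma loss_1max_truncate:
  assumes "m \<le> p" "\<And>i. m \<le> i \<Longrightarrow> i < p \<Longrightarrow> 0 < q i"
    and "\<And>i j. m \<le> i \<Longrightarrow> i < p \<Longrightarrow> j < q i \<Longrightarrow> ratio X k A i j = tgt i j"
  shows "loss_1max p q tgt X k A = loss_1max m q tgt X k A"
  unfolding loss_1max_def
proof (rule sum.mono_neutral_right)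
  show "\<forall>i\<in>{..<p} - {..<m}. Max {\<bar>ratio X k A i j - tgt i j\<bar> | j. j < q i} = 0"
  proof
    fix i assume "i \<in> {..<p} - {..<m}"
    then have "0 < q i" "\<And>j. j < q i \<Longrightarrow> \<bar>ratio X k A i j - tgt i j\<bar> = 0"
      using assms(2,3) by auto
    then have "{\<bar>ratio X k A i j - tgt i j\<bar> | j. j < q i} = {0}"
      by (auto intro!: exI[of _ 0])
    then show "Max {\<bar>ratio X k A i j - tgt i j\<bar> | j. j < q i} = 0"
      by simp
  qed
qed (use assms(1) in auto)

lemma finite_deviations: "finite {f i j | i j. i < (p::nat) \<and> j < (q i::nat)}"
proof -
  have "{f i j | i j. i < p \<and> j < q i} = (\<Union>i<p. f i ` {..<q i})"
    by blast
  then show ?thesis by simp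
qed

lemma loss_max_ge:
  assumes "i < p" "j < q i"
  shows "\<bar>ratio X k A i j - tgt i j\<bar> \<le> loss_max p q tgt X k A"
  unfolding loss_max_def by (rule Max_ge[OF finite_deviations]) (use assms in blast)

lemma loss_max_le:
  assumes "i\<^sub>0 < p" "0 < q i\<^sub>0" "\<And>i j. i < p \<Longrightarrow> j < q i \<Longrightarrow> \<bar>ratio X k A i j - tgt i j\<bar> \<le> b"
  shows "loss_max p q tgt X k A \<le> b"
  unfolding loss_max_def
  by (rule Max.boundedI[OF finite_deviations]) (use assms in auto)

lemmas loss_simps = loss_1_def loss_1max_def setcompr_eq_image lessThan_def[symmetric]
  ratio_pair lessThan_nat_numeral lessThan_Suc

text \<open>Candidates 0 and 1 coincide and candidate 2 differs from them exactly on attributes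
  0, 1, 2. The committee \<open>{0, 1}\<close> misses attribute 0 completely but is exact on attribute 2
  and off by only 1/8 on attribute 1; the committees containing 2 deviate by at most 1/2
  everywhere, but by 1/2 on both attributes 0 and 2.\<close>

definition bin_X :: "nat \<Rightarrow> nat \<Rightarrow> nat" where
  "bin_X c i = of_bool (c = 2 \<and> i < 3)"

definition bin_tgt :: "nat \<Rightarrow> nat \<Rightarrow> real" where
  "bin_tgt i j = (if i = 0 then of_bool (j = 1) else if i = 1 then (if j = 0 then 7/8 else 1/8)
                  else of_bool (j = 0))"

lemma bin_valid_instance: "3 \<le> p \<Longrightarrow> valid_instance p (\<lambda>_. 2) {0, 1, 2} bin_X bin_tgt 2"
  unfolding valid_instance_def by (auto simp: bin_X_def bin_tgt_def numeral_eq_Suc)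

lemma bin_truncate:
  assumes "3 \<le> p" "A \<in> {{0, 1}, {0, 2}, {1, 2}}"
  shows "loss_1 p (\<lambda>_. 2) bin_tgt bin_X 2 A = loss_1 3 (\<lambda>_. 2) bin_tgt bin_X 2 A \<and>
      loss_1max p (\<lambda>_. 2) bin_tgt bin_X 2 A = loss_1max 3 (\<lambda>_. 2) bin_tgt bin_X 2 A"
  using assms
  by (auto intro!: loss_1_truncate loss_1max_truncate simp: ratio_pair bin_X_def bin_tgt_def)

lemma bin_losses:
  assumes "3 \<le> p"
  shows "loss_1 p (\<lambda>_. 2) bin_tgt bin_X 2 {0, 1} = 9/4 \<and>
      loss_1 p (\<lambda>_. 2) bin_tgt bin_X 2 {0, 2} = 11/4 \<and>
      loss_1 p (\<lambda>_. 2) bin_tgt bin_X 2 {1, 2} = 11/4 \<and>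
      loss_1max p (\<lambda>_. 2) bin_tgt bin_X 2 {0, 1} = 9/8 \<and>
      loss_1max p (\<lambda>_. 2) bin_tgt bin_X 2 {0, 2} = 11/8 \<and>
      loss_1max p (\<lambda>_. 2) bin_tgt bin_X 2 {1, 2} = 11/8"
  by (simp only: bin_truncate[OF assms(1)] insert_iff simp_thms)
    (simp add: loss_simps bin_X_def bin_tgt_def)

lemma bin_loss_max:
  assumes "3 \<le> p"
  shows "1 \<le> loss_max p (\<lambda>_. 2) bin_tgt bin_X 2 {0, 1} \<and>
      loss_max p (\<lambda>_. 2) bin_tgt bin_X 2 {0, 2} \<le> 1/2 \<and>
      loss_max p (\<lambda>_. 2) bin_tgt bin_X 2 {1, 2} \<le> 1/2"
proof (intro conjI)
  show "1 \<le> loss_max p (\<lambda>_. 2) bin_tgt bin_X 2 {0, 1}"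
    using assms loss_max_ge[of 0 p 0 "\<lambda>_. 2" bin_X 2 "{0, 1}" bin_tgt]
    by (simp add: ratio_pair bin_X_def bin_tgt_def)
  show "loss_max p (\<lambda>_. 2) bin_tgt bin_X 2 {0, 2} \<le> 1/2"
    by (rule loss_max_le[of 0]) (use assms in \<open>auto simp: ratio_pair bin_X_def bin_tgt_def less_2_cases_iff\<close>)
  show "loss_max p (\<lambda>_. 2) bin_tgt bin_X 2 {1, 2} \<le> 1/2"
    by (rule loss_max_le[of 0]) (use assms in \<open>auto simp: ratio_pair bin_X_def bin_tgt_def less_2_cases_iff\<close>)
qed

lemma loss_1_loss_max_optima_disjoint:
  assumes "3 \<le> p"
  shows "\<exists>q C X tgt.
      valid_instance p q C X tgt 2 \<and> (\<forall>i<p. q i = 2) \<and>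
      optimal_committees (loss_1 p q tgt X 2) C 2 \<inter>
      optimal_committees (loss_max p q tgt X 2) C 2 = {}"
proof -
  have "optimal_committees (loss_1 p (\<lambda>_. 2) bin_tgt bin_X 2) {0, 1, 2} 2 \<inter>
      optimal_committees (loss_max p (\<lambda>_. 2) bin_tgt bin_X 2) {0, 1, 2} 2 = {}"
    using bin_losses[OF assms] bin_loss_max[OF assms]
    by (intro optimal_pair_committees_disjointI) (simp only: ball_simps bex_simps simp_thms, linarith)
  with bin_valid_instance[OF assms] show ?thesis
    by blast
qed

lemma loss_max_loss_1max_optima_disjoint:
  assumes "3 \<le> p"
  shows "\<exists>q C X tgt k.
      valid_instance p q C X tgt k \<and>
      optimal_committees (loss_max p q tgt X k) C k \<inter>
      optimal_committees (loss_1max p q tgt X k) C k = {}"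
proof -
  have "optimal_committees (loss_max p (\<lambda>_. 2) bin_tgt bin_X 2) {0, 1, 2} 2 \<inter>
      optimal_committees (loss_1max p (\<lambda>_. 2) bin_tgt bin_X 2) {0, 1, 2} 2 = {}"
    using bin_losses[OF assms] bin_loss_max[OF assms]
    by (intro optimal_pair_committees_disjointI) (simp only: ball_simps bex_simps simp_thms, linarith)
  with bin_valid_instance[OF assms] show ?thesis
    by blast
qed

text \<open>On the four-valued attribute 0 the committee \<open>{0, 2}\<close> misses the whole target mass
  (\<open>\<ell>\<^sub>1\<close> deviation 2), but spread over four values its largest deviation is only 5/8;
  on the binary attribute 1 it is the best committee.\<close>

definition quat_q :: "nat \<Rightarrow> nat" where
  "quat_q i = (if i = 0 then 4 else if i = 1 then 2 else 1)"

definition quat_X :: "nat \<Rightarrow> nat \<Rightarrow> nat" where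
  "quat_X c i = (if i = 0 then (if c = 0 then 2 else if c = 1 then 1 else 3)
                 else of_bool (i = 1 \<and> c = 1))"

definition quat_tgt :: "nat \<Rightarrow> nat \<Rightarrow> real" where
  "quat_tgt i j = (if i = 0 then (if j = 0 then 3/8 else if j = 1 then 5/8 else 0)
                   else if i = 1 then (if j = 0 then 7/8 else if j = 1 then 1/8 else 0)
                   else of_bool (j = 0))"

lemma quat_valid_instance: "2 \<le> p \<Longrightarrow> valid_instance p quat_q {0, 1, 2} quat_X quat_tgt 2"
  unfolding valid_instance_def by (auto simp: quat_X_def quat_q_def quat_tgt_def numeral_eq_Suc)

lemma quat_truncate:
  assumes "2 \<le> p" "A \<in> {{0, 1}, {0, 2}, {1, 2}}"
  shows "loss_1 p quat_q quat_tgt quat_X 2 A = loss_1 2 quat_q quat_tgt quat_X 2 A \<and>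
      loss_1max p quat_q quat_tgt quat_X 2 A = loss_1max 2 quat_q quat_tgt quat_X 2 A"
  using assms
  by (auto intro!: loss_1_truncate loss_1max_truncate
      simp: ratio_pair quat_q_def quat_X_def quat_tgt_def)

lemma quat_losses:
  assumes "2 \<le> p"
  shows "loss_1 p quat_q quat_tgt quat_X 2 {0, 1} = 7/4 \<and>
      loss_1 p quat_q quat_tgt quat_X 2 {0, 2} = 9/4 \<and>
      loss_1 p quat_q quat_tgt quat_X 2 {1, 2} = 7/4 \<and>
      loss_1max p quat_q quat_tgt quat_X 2 {0, 1} = 7/8 \<and>
      loss_1max p quat_q quat_tgt quat_X 2 {0, 2} = 3/4 \<and>
      loss_1max p quat_q quat_tgt quat_X 2 {1, 2} = 7/8"
  by (simp only: quat_truncate[OF assms(1)] insert_iff simp_thms)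
    (simp add: loss_simps quat_q_def quat_X_def quat_tgt_def)

lemma loss_1_loss_1max_optima_disjoint:
  assumes "2 \<le> p"
  shows "\<exists>q C X tgt k.
      valid_instance p q C X tgt k \<and> (\<exists>i<p. q i = 4) \<and>
      optimal_committees (loss_1 p q tgt X k) C k \<inter>
      optimal_committees (loss_1max p q tgt X k) C k = {}"
proof -
  have "optimal_committees (loss_1 p quat_q quat_tgt quat_X 2) {0, 1, 2} 2 \<inter>
      optimal_committees (loss_1max p quat_q quat_tgt quat_X 2) {0, 1, 2} 2 = {}"
    using quat_losses[OF assms]
    by (intro optimal_pair_committees_disjointI) (simp only: ball_simps bex_simps simp_thms, linarith)
  moreover have "\<exists>i<p. quat_q i = 4"
    using assms by (intro exI[of _ 0]) (simp add: quat_q_def)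
  ultimately show ?thesis
    using quat_valid_instance[OF assms] by blast
qed

text \<open>Attribute 0 is constant and always misses its target by 1, so every committee is
  optimal for the max loss, while the \<open>\<ell>\<^sub>1\<close> loss still prefers the committee containing the
  only candidate that meets the target of attribute 1.\<close>

definition two_X :: "nat \<Rightarrow> nat \<Rightarrow> nat" where
  "two_X c i = of_bool (c = 2 \<and> i = 1)"

definition two_tgt :: "nat \<Rightarrow> nat \<Rightarrow> real" where
  "two_tgt i j = of_bool (j = 1)"

lemma two_valid_instance: "valid_instance 2 (\<lambda>_. 2) {0, 1, 2} two_X two_tgt 2"
  unfolding valid_instance_def by (auto simp: two_X_def two_tgt_def numeral_eq_Suc)

lemma two_loss_max_ge_1:
  assumes "card A = 2"
  shows "1 \<le> loss_max 2 (\<lambda>_. 2) two_tgt two_X 2 A"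
proof -
  have "ratio two_X 2 A 0 0 = 1"
    using assms by (subst ratio_constant_attribute[where v = 0]) (auto simp: two_X_def)
  then show ?thesis
    using loss_max_ge[of 0 2 0 "\<lambda>_. 2" two_X 2 A two_tgt] by (simp add: two_tgt_def)
qed

lemma loss_1_loss_max_optima_differ:
  "\<exists>q C X tgt k.
      valid_instance 2 q C X tgt k \<and> (\<forall>i<2. q i = 2) \<and>
      optimal_committees (loss_1 2 q tgt X k) C k \<noteq>
      optimal_committees (loss_max 2 q tgt X k) C k"
proof -
  let ?loss_1 = "loss_1 2 (\<lambda>_. 2) two_tgt two_X 2"
  let ?loss_max = "loss_max 2 (\<lambda>_. 2) two_tgt two_X 2"
  have "?loss_max {0, 1} \<le> 1"
    by (rule loss_max_le[of 0]) (auto simp: two_tgt_def ratio_pair two_X_def less_2_cases_iff)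
  then have "?loss_max {0, 1} \<le> ?loss_max B" if "card B = 2" for B
    using two_loss_max_ge_1[OF that] by linarith
  then have "{0, 1} \<in> optimal_committees ?loss_max {0, 1, 2} 2"
    unfolding optimal_committees_def by auto
  moreover have "?loss_1 {0, 2} < ?loss_1 {0, 1}"
    by (simp add: loss_simps two_tgt_def two_X_def)
  then have "{0, 1} \<notin> optimal_committees ?loss_1 {0, 1, 2} 2"
    unfolding optimal_committees_def by (auto intro!: exI[of _ "{0, 2}"])
  ultimately show ?thesis
    using two_valid_instance by blast
qed

theorem proposition2:
  shows
  "(\<forall>p\<ge>3. \<exists>q C X tgt.
      valid_instance p q C X tgt 2 \<and> (\<forall>i<p. q i = 2) \<and>
      optimal_committees (loss_1 p q tgt X 2) C 2 \<inter>
      optimal_committees (loss_max p q tgt X 2) C 2 = {})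
   \<and>
   (\<forall>p\<ge>3. \<exists>q C X tgt k.
      valid_instance p q C X tgt k \<and>
      optimal_committees (loss_max p q tgt X k) C k \<inter>
      optimal_committees (loss_1max p q tgt X k) C k = {})
   \<and>
   (\<forall>p\<ge>2. \<exists>q C X tgt k.
      valid_instance p q C X tgt k \<and> (\<exists>i<p. q i = 4) \<and>
      optimal_committees (loss_1 p q tgt X k) C k \<inter>
      optimal_committees (loss_1max p q tgt X k) C k = {})
   \<and>
   (\<exists>q C X tgt k.
      valid_instance 2 q C X tgt k \<and> (\<forall>i<2. q i = 2) \<and>
      optimal_committees (loss_1 2 q tgt X k) C k \<noteq>
      optimal_committees (loss_max 2 q tgt X k) C k)"
  using loss_1_loss_max_optima_disjoint loss_max_loss_1max_optima_disjoint
    loss_1_loss_1max_optima_disjoint loss_1_loss_max_optima_differ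
  by blast

end
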